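(* Let $k\ge 4$ be an integer, let $m$ be an integer with $$m\ge \min\left\{\left\lceil \frac{(k+2)(k-3)}{2k}\right\rceil,\ \left\lceil \sqrt{2k+\tfrac14}-\tfrac32\right\rceil\right\}-1,$$ and let $D\ge m2^{k-1}$ be a positive integer divisible by $4$. Then there exists a binary self-orthogonal $[N,k,D]$ Griesmer code, where $N=\sum_{i=0}^{k-1}\lceil D/2^i\rceil$.
   Context: A binary code is self-orthogonal if $C\subseteq C^\perp$. A binary $[N,k,D]$ code is a Griesmer code if $N=\sum_{i=0}^{k-1}\lceil D/2^i\rceil$. *)

theory Defs
  imports Complex_Main
begin

text \<open>Binary vectors of length N are represented as bool lists (True = 1),
  addition over GF(2) is componentwise exclusive or.\<close>

definition vadd :: "bool list \<Rightarrow> bool list \<Rightarrow> bool list" where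
  "vadd u v = map2 (\<noteq>) u v"

definition hweight :: "bool list \<Rightarrow> nat" where
  "hweight u = length (filter id u)"

definition zero_vec :: "nat \<Rightarrow> bool list" where
  "zero_vec N = replicate N False"

definition binner_zero :: "bool list \<Rightarrow> bool list \<Rightarrow> bool" where
  "binner_zero u v = even (length (filter id (map2 (\<and>) u v)))"

text \<open>A binary linear code of length N: a subspace of GF(2)^N
  (nonempty subset closed under addition; scalars are only 0 and 1).\<close>
definition binary_linear_code :: "nat \<Rightarrow> bool list set \<Rightarrow> bool" where
  "binary_linear_code N C \<longleftrightarrow>
     C \<subseteq> {u. length u = N} \<and> zero_vec N \<in> C \<and> (\<forall>u\<in>C. \<forall>v\<in>C. vadd u v \<in> C)"

text \<open>Binary [N,k,D] code: linear of length N, dimension k (i.e. 2^k codewords),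
  minimum distance (= minimum nonzero weight) exactly D.\<close>
definition binary_code_NkD :: "nat \<Rightarrow> nat \<Rightarrow> nat \<Rightarrow> bool list set \<Rightarrow> bool" where
  "binary_code_NkD N k D C \<longleftrightarrow>
     binary_linear_code N C \<and> card C = 2 ^ k \<and>
     (\<forall>u\<in>C. u \<noteq> zero_vec N \<longrightarrow> D \<le> hweight u) \<and>
     (\<exists>u\<in>C. u \<noteq> zero_vec N \<and> hweight u = D)"

definition self_orthogonal :: "bool list set \<Rightarrow> bool" where
  "self_orthogonal C \<longleftrightarrow> (\<forall>u\<in>C. \<forall>v\<in>C. binner_zero u v)"

definition griesmer_length :: "nat \<Rightarrow> nat \<Rightarrow> nat" where
  "griesmer_length k D = (\<Sum>i<k. nat \<lceil>real D / 2 ^ i\<rceil>)"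

end

theory Submission
  imports Defs "Berlekamp_Zassenhaus.Distinct_Degree_Factorization"
begin

text \<open>Write \<open>D = s 2^(k-1) - (\<Sum>e\<in>E. 2^e)\<close> with \<open>E \<subseteq> {2..k-2}\<close>, which is possible because
  \<open>4 dvd D\<close>. Following Belov, the code consists of \<open>s\<close> copies of the simplex code of dimension \<open>k\<close>
  with an anticode removed, namely the union of subspaces \<open>U\<^sub>e\<close> of dimension \<open>e + 1\<close>, \<open>e \<in> E\<close>.
  Realising \<open>GF(2)^k\<close> as the polynomials of degree \<open>< k\<close>, \<open>U\<^sub>e\<close> consists of the multiples of an
  irreducible polynomial \<open>g\<^sub>e\<close> of degree \<open>k - 1 - e\<close>. The bound on \<open>m\<close> makes the product of
  any \<open>s + 1\<close> of the \<open>g\<^sub>e\<close> have degree at least \<open>k\<close>, so no nonzero vector lies in more than \<open>s\<close> of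
  the \<open>U\<^sub>e\<close>. A nonzero message \<open>x\<close> then has weight \<open>s 2^(k-1)\<close> minus the sum of \<open>2^e\<close> over the
  \<open>U\<^sub>e\<close> not orthogonal to \<open>x\<close>: the minimum distance is \<open>D\<close>, attained by a message orthogonal
  to no \<open>U\<^sub>e\<close>, and the length is the Griesmer bound. As \<open>e \<ge> 2\<close> and \<open>k \<ge> 3\<close>, all weights are
  divisible by \<open>4\<close>, which makes the code self-orthogonal.\<close>

section \<open>Irreducible polynomials over prime fields\<close>

lemma prod_primes_dvd:
  fixes x :: "'a::factorial_semiring_gcd"
  assumes "finite A" "\<And>p. p \<in> A \<Longrightarrow> prime p" "\<And>p. p \<in> A \<Longrightarrow> p dvd x"
  shows "\<Prod>A dvd x"
  using assms
proof (induction A rule: finite_induct)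
  case (insert a A)
  have a: "prime a" "a dvd x"
    by (auto intro: insert.prems)
  have IH: "\<Prod>A dvd x"
    by (rule insert.IH) (auto intro: insert.prems)
  have "\<not> a dvd \<Prod>A"
  proof
    assume "a dvd \<Prod>A"
    then obtain b where b: "b \<in> A" "a dvd b"
      using prime_dvd_prod_iff[OF insert.hyps(1) a(1), where f = "\<lambda>x. x"] by blast
    have "prime b"
      using b(1) by (auto intro: insert.prems)
    then have "a = b"
      using primes_dvd_imp_eq[OF a(1) _ b(2)] by blast
    with b(1) insert.hyps(2) show False by simp
  qed
  then have "a * \<Prod>A dvd x"
    using divides_mult[OF a(2) IH] prime_imp_coprime[OF a(1)] by blast
  then show ?case
    by (simp only: prod.insert[OF insert.hyps])
qed simp

lemma sum_degree_primes_dvd_le: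
  fixes x :: "'a::field_gcd poly"
  assumes "finite A" "\<And>p. p \<in> A \<Longrightarrow> prime p" "\<And>p. p \<in> A \<Longrightarrow> p dvd x" "x \<noteq> 0"
  shows "(\<Sum>p\<in>A. degree p) \<le> degree x"
proof -
  have "(\<Sum>p\<in>A. degree p) = degree (\<Prod>A)"
    using assms(2) by (subst degree_prod_eq_sum_degree) auto
  also have "\<dots> \<le> degree x"
    using prod_primes_dvd[OF assms(1-3)] assms(4) by (rule dvd_imp_degree_le)
  finally show ?thesis .
qed

lemma sum_power_less_power:
  fixes c :: nat
  assumes "c \<ge> 2"
  shows "(\<Sum>d<n. c ^ d) < c ^ n"
proof (induction n)
  case (Suc n)
  then have "(\<Sum>d<Suc n. c ^ d) < 2 * c ^ n" by simp
  also have "\<dots> \<le> c ^ Suc n" using assms by simp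
  finally show ?case .
qed simp

definition x_pow_minus_x :: "nat \<Rightarrow> 'a::prime_card mod_ring poly" where
  "x_pow_minus_x n = monom 1 1 ^ (CARD('a) ^ n) - monom 1 1"

lemma two_le_card_prime_card: "2 \<le> CARD('a::prime_card)"
  using prime_card prime_ge_2_nat by blast

lemma degree_x_pow_minus_x:
  assumes "n \<ge> 1"
  shows "degree (x_pow_minus_x n :: 'a::prime_card mod_ring poly) = CARD('a) ^ n"
proof -
  have "2 \<le> CARD('a) ^ n"
    using two_le_card_prime_card[where 'a='a] power_increasing[OF assms, of "CARD('a)"] by simp
  then show ?thesis
    unfolding x_pow_minus_x_def
    by (subst degree_minus_eq_right) (auto simp: degree_power_eq degree_monom_eq)
qed

lemma x_pow_minus_x_nonzero:
  assumes "n \<ge> 1"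
  shows "x_pow_minus_x n \<noteq> 0"
proof -
  have "degree (x_pow_minus_x n :: 'a::prime_card mod_ring poly) \<noteq> 0"
    using degree_x_pow_minus_x[OF assms, where 'a='a] two_le_card_prime_card[where 'a='a] by simp
  then show ?thesis by auto
qed

lemma pderiv_x_pow_minus_x: "n \<ge> 1 \<Longrightarrow> pderiv (x_pow_minus_x n) = -1"
  by (simp add: x_pow_minus_x_def pderiv_power pderiv_diff pderiv_monom of_nat_power
      of_nat_card_eq_0 power_0_left)

lemma multiplicity_x_pow_minus_x_le_1:
  assumes "n \<ge> 1" "prime p"
  shows "multiplicity p (x_pow_minus_x n) \<le> 1"
proof (rule ccontr)
  assume "\<not> ?thesis"
  have "\<not> is_unit p"
    using assms(2) not_prime_unit by blast
  with \<open>\<not> ?thesis\<close> have "p ^ 2 dvd x_pow_minus_x n"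
    using x_pow_minus_x_nonzero[OF assms(1)] by (subst power_dvd_iff_le_multiplicity) auto
  then have "p * p dvd x_pow_minus_x n"
    by (simp add: power2_eq_square)
  moreover have "degree p > 0"
    using assms(2) by (intro irreducible_degree_field prime_elem_imp_irreducible) auto
  moreover have "square_free (x_pow_minus_x n)"
    using assms(1) by (intro separable_imp_square_free) (simp add: separable_def pderiv_x_pow_minus_x)
  ultimately show False
    unfolding square_free_def by blast
qed

lemma x_pow_minus_x_dvd_prod_prime_factors:
  assumes "n \<ge> 1"
  shows "x_pow_minus_x n dvd \<Prod>(prime_factors (x_pow_minus_x n))"
proof (rule multiplicity_le_imp_dvd[OF x_pow_minus_x_nonzero[OF assms]])
  fix q :: "'a mod_ring poly" assume q: "prime q"
  show "multiplicity q (x_pow_minus_x n) \<le> multiplicity q (\<Prod>(prime_factors (x_pow_minus_x n)))"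
  proof (cases "q dvd x_pow_minus_x n")
    case True
    then have "q \<in> prime_factors (x_pow_minus_x n)"
      using q x_pow_minus_x_nonzero[OF assms] by (simp add: in_prime_factors_iff)
    then have "0 < multiplicity q (\<Prod>(prime_factors (x_pow_minus_x n)))"
      using q by (subst prime_multiplicity_gt_zero_iff) auto
    then show ?thesis
      using multiplicity_x_pow_minus_x_le_1[OF assms q] by simp
  qed (simp add: not_dvd_imp_multiplicity_0)
qed

lemma dvd_x_pow_minus_x_degree:
  "irreducible p \<Longrightarrow> p dvd x_pow_minus_x (degree p)"
  using degree_divisor(1)[OF _ refl] by (simp add: x_pow_minus_x_def)

lemma degree_le_if_dvd_x_pow_minus_x:
  assumes "irreducible p" "p dvd x_pow_minus_x n" "n \<ge> 1"
  shows "degree p \<le> n"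
  using degree_divisor(2)[OF assms(1) refl, of n] assms(2,3) by (force simp: x_pow_minus_x_def)

lemma sum_degree_primes_of_degree_le:
  fixes A :: "'a::prime_card mod_ring poly set"
  assumes "finite A" "\<And>p. p \<in> A \<Longrightarrow> prime p \<and> degree p = d" "d \<ge> 1"
  shows "(\<Sum>p\<in>A. degree p) \<le> CARD('a) ^ d"
proof -
  have "(\<Sum>p\<in>A. degree p) \<le> degree (x_pow_minus_x d :: 'a mod_ring poly)"
  proof (rule sum_degree_primes_dvd_le)
    fix p assume "p \<in> A"
    then show "prime p" "p dvd x_pow_minus_x d"
      using assms(2) dvd_x_pow_minus_x_degree[OF prime_elem_imp_irreducible] by auto
  qed (use assms x_pow_minus_x_nonzero in auto)
  then show ?thesis
    using degree_x_pow_minus_x[OF assms(3), where 'a='a] by simp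
qed

text \<open>If no irreducible polynomial of degree \<open>n\<close> existed, the squarefree polynomial \<open>X^(q^n) - X\<close>
  would be the product of its prime factors, all of degree \<open>d < n\<close>; those of degree \<open>d\<close> divide
  \<open>X^(q^d) - X\<close>, so their degrees add up to at most \<open>q^d\<close>, whereas \<open>q^0 + ... + q^(n-1) < q^n\<close>.\<close>

lemma exists_irreducible_monic_poly:
  assumes "n \<ge> 1"
  shows "\<exists>f :: 'a::prime_card mod_ring poly. irreducible f \<and> monic f \<and> degree f = n"
proof (rule ccontr)
  assume none: "\<not> ?thesis"
  define PF where "PF = prime_factors (x_pow_minus_x n :: 'a mod_ring poly)"
  have PF_degree: "degree p \<in> {1..<n}" if "p \<in> PF" for p
  proof -
    have "prime p" "p dvd x_pow_minus_x n"
      using that by (auto simp: PF_def)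
    then have irr: "irreducible p" and "monic p" "p dvd x_pow_minus_x n"
      by (auto intro: prime_elem_imp_irreducible) (metis monic_normalize normalize_prime not_prime_0)
    then show ?thesis
      using none degree_le_if_dvd_x_pow_minus_x[OF irr _ assms] irreducible_degree_field[OF irr]
      by fastforce
  qed
  have "CARD('a) ^ n = degree (x_pow_minus_x n :: 'a mod_ring poly)"
    using assms by (simp add: degree_x_pow_minus_x)
  also have "\<dots> \<le> degree (\<Prod>PF)"
    using x_pow_minus_x_dvd_prod_prime_factors[OF assms] unfolding PF_def
    by (intro dvd_imp_degree_le) auto
  also have "\<dots> = (\<Sum>p\<in>PF. degree p)"
    by (subst degree_prod_eq_sum_degree) (auto simp: PF_def)
  also have "\<dots> = (\<Sum>d\<in>{1..<n}. \<Sum>p\<in>{p \<in> PF. degree p = d}. degree p)"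
    using PF_degree by (intro sum.group[symmetric]) (auto simp: PF_def)
  also have "\<dots> \<le> (\<Sum>d\<in>{1..<n}. CARD('a) ^ d)"
    by (intro sum_mono sum_degree_primes_of_degree_le) (auto simp: PF_def)
  also have "\<dots> \<le> (\<Sum>d<n. CARD('a) ^ d)"
    by (rule sum_mono2) auto
  also have "\<dots> < CARD('a) ^ n"
    using two_le_card_prime_card by (rule sum_power_less_power)
  finally show False by simp
qed

lemma exists_irreducible_monic_polys:
  assumes "\<And>i. i \<in> I \<Longrightarrow> d i \<ge> 1"
  shows "\<exists>g :: 'b \<Rightarrow> 'a::prime_card mod_ring poly.
    \<forall>i\<in>I. irreducible (g i) \<and> monic (g i) \<and> degree (g i) = d i"
proof (intro exI ballI)
  fix i assume "i \<in> I"
  let ?P = "\<lambda>f :: 'a mod_ring poly. irreducible f \<and> monic f \<and> degree f = d i"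
  have "\<exists>f. ?P f"
    using assms[OF \<open>i \<in> I\<close>] by (rule exists_irreducible_monic_poly)
  then show "?P (Eps ?P)"
    by (rule someI_ex)
qed

section \<open>Vectors over GF(2) as polynomials\<close>

type_synonym gf2 = "bool mod_ring"

lemma gf2_two: "(2::gf2) = 0"
  using of_nat_card_eq_0[where 'a=bool] by simp

lemma gf2_add_self [simp]: "(x::gf2) + x = 0"
  by (simp only: mult_2[symmetric] gf2_two mult_zero_left)

lemma gf2_UNIV: "(UNIV :: gf2 set) = {0, 1}"
proof (rule card_subset_eq[symmetric])
  show "card {0, 1 :: gf2} = card (UNIV :: gf2 set)" by simp
qed auto

lemma gf2_cases: "(x::gf2) = 0 \<or> x = 1"
  using gf2_UNIV by auto

lemma gf2_add_eq_1_iff: "(x::gf2) + y = 1 \<longleftrightarrow> (x = 1) \<noteq> (y = 1)"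
  using gf2_cases[of x] gf2_cases[of y] by auto

lemma gf2_poly_add_self [simp]: "(p::gf2 poly) + p = 0"
  by (rule poly_eqI) (simp only: coeff_add gf2_add_self coeff_0)

lemma gf2_poly_add_eq_0_iff: "(p::gf2 poly) + q = 0 \<longleftrightarrow> p = q"
proof
  assume "p + q = 0"
  then have "p + (p + q) = p" by simp
  then show "p = q" by (simp only: add.assoc[symmetric] gf2_poly_add_self add_0_left)
qed simp

lemma card_half_of_additive_gf2_map:
  fixes S :: "'b::cancel_semigroup_add set" and \<phi> :: "'b \<Rightarrow> gf2"
  assumes "finite S"
    and add_closed: "\<And>a b. a \<in> S \<Longrightarrow> b \<in> S \<Longrightarrow> a + b \<in> S"
    and additive: "\<And>a b. a \<in> S \<Longrightarrow> b \<in> S \<Longrightarrow> \<phi> (a + b) = \<phi> a + \<phi> b"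
    and w: "w \<in> S" "\<phi> w = 1"
  shows "2 * card {v \<in> S. \<phi> v = 1} = card S"
proof -
  define A0 where "A0 = {v \<in> S. \<phi> v = 0}"
  define A1 where "A1 = {v \<in> S. \<phi> v = 1}"
  have inj: "inj_on (\<lambda>v. v + w) A" for A
    by (rule inj_onI) simp
  have shift: "v + w \<in> S \<and> \<phi> (v + w) = \<phi> v + 1" if "v \<in> S" for v
    using add_closed[OF that w(1)] additive[OF that w(1)] w(2) by simp
  have "card A0 \<le> card A1"
  proof (rule card_inj_on_le[OF inj])
    show "(\<lambda>v. v + w) ` A0 \<subseteq> A1"
      using shift by (auto simp: A0_def A1_def)
    show "finite A1"
      using assms(1) by (simp add: A1_def)
  qed
  moreover have "card A1 \<le> card A0"
  proof (rule card_inj_on_le[OF inj])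
    show "(\<lambda>v. v + w) ` A1 \<subseteq> A0"
      using shift by (auto simp: A0_def A1_def)
    show "finite A0"
      using assms(1) by (simp add: A0_def)
  qed
  moreover have "card S = card A0 + card A1"
  proof -
    have "S = A0 \<union> A1"
      using gf2_cases by (auto simp: A0_def A1_def)
    moreover have "card (A0 \<union> A1) = card A0 + card A1"
      using assms(1) by (intro card_Un_disjoint) (auto simp: A0_def A1_def)
    ultimately show ?thesis by simp
  qed
  ultimately show ?thesis
    by (simp add: A1_def)
qed

definition polys_below :: "nat \<Rightarrow> 'a::zero poly set" where
  "polys_below n = {p. \<forall>i\<ge>n. coeff p i = 0}"

lemma polys_below_0: "polys_below 0 = {0}"
  by (auto simp: polys_below_def poly_eq_iff)

lemma polys_below_Suc: "polys_below (Suc n) = (\<lambda>(a, q). pCons a q) ` (UNIV \<times> polys_below n)"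
proof (intro Set.set_eqI iffI)
  fix p :: "'a poly"
  assume p: "p \<in> polys_below (Suc n)"
  obtain a q where "p = pCons a q" by (cases p)
  moreover have "q \<in> polys_below n"
    using p by (auto simp: polys_below_def \<open>p = pCons a q\<close>)
  ultimately show "p \<in> (\<lambda>(a, q). pCons a q) ` (UNIV \<times> polys_below n)" by auto
qed (auto simp: polys_below_def coeff_pCons split: nat.split)

lemma inj_on_pCons: "inj_on (\<lambda>(a, q). pCons a q) A"
  by (auto simp: inj_on_def)

lemma finite_polys_below: "finite (polys_below n :: 'a::{zero,finite} poly set)"
  by (induction n) (simp_all add: polys_below_0 polys_below_Suc)

lemma card_polys_below: "card (polys_below n :: 'a::{zero,finite} poly set) = CARD('a) ^ n"
proof (induction n)
  case (Suc n)
  then show ?case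
    by (simp add: polys_below_Suc card_image[OF inj_on_pCons] card_cartesian_product)
qed (simp add: polys_below_0)

lemma polys_below_iff_degree:
  assumes "n \<ge> 1"
  shows "p \<in> polys_below n \<longleftrightarrow> degree p < n"
proof
  assume p: "p \<in> polys_below n"
  show "degree p < n"
  proof (cases "p = 0")
    case False
    then have "coeff p (degree p) \<noteq> 0" by simp
    with p show ?thesis by (auto simp: polys_below_def not_less[symmetric])
  qed (use assms in simp)
qed (auto simp: polys_below_def intro: coeff_eq_0)

lemma zero_in_polys_below [simp]: "0 \<in> polys_below n"
  by (simp add: polys_below_def)

lemma add_in_polys_below:
  "p \<in> polys_below n \<Longrightarrow> q \<in> polys_below n \<Longrightarrow> p + q \<in> polys_below n"
  by (simp add: polys_below_def)

definition poly_inner :: "nat \<Rightarrow> 'a::comm_semiring_0 poly \<Rightarrow> 'a poly \<Rightarrow> 'a" where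
  "poly_inner n x v = (\<Sum>i<n. coeff x i * coeff v i)"

lemma poly_inner_add_left: "poly_inner n (x + y) v = poly_inner n x v + poly_inner n y v"
  by (simp add: poly_inner_def distrib_right sum.distrib)

lemma poly_inner_add_right: "poly_inner n x (v + w) = poly_inner n x v + poly_inner n x w"
  by (simp add: poly_inner_def distrib_left sum.distrib)

lemma poly_inner_zero_left [simp]: "poly_inner n 0 v = 0"
  by (simp add: poly_inner_def)

lemma poly_inner_zero_right [simp]: "poly_inner n x 0 = 0"
  by (simp add: poly_inner_def)

lemma poly_inner_commute: "poly_inner n x v = poly_inner n v x"
  by (simp add: poly_inner_def mult.commute)

lemma poly_inner_monom_left:
  fixes v :: "'a::comm_semiring_1 poly"
  assumes "i < n"
  shows "poly_inner n (monom 1 i) v = coeff v i"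
proof -
  have "poly_inner n (monom 1 i) v = (\<Sum>j<n. if j = i then coeff v i else 0)"
    unfolding poly_inner_def by (rule sum.cong) (auto simp: coeff_monom)
  then show ?thesis using assms by simp
qed

lemma card_poly_inner_eq_1:
  assumes "x \<in> polys_below n" "x \<noteq> 0"
  shows "2 * card {v \<in> polys_below n. poly_inner n x v = (1::gf2)} = 2 ^ n"
proof -
  obtain i where i: "coeff x i \<noteq> 0"
    using assms(2) by (meson leading_coeff_neq_0)
  have "i < n"
    using assms(1) i by (auto simp: polys_below_def not_less[symmetric])
  have "2 * card {v \<in> polys_below n. poly_inner n x v = 1} = card (polys_below n :: gf2 poly set)"
  proof (rule card_half_of_additive_gf2_map)
    show "monom 1 i \<in> polys_below n"
      using \<open>i < n\<close> by (simp add: polys_below_def coeff_monom)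
    have "poly_inner n x (monom 1 i) = poly_inner n (monom 1 i) x"
      by (rule poly_inner_commute)
    also have "\<dots> = coeff x i"
      using \<open>i < n\<close> by (rule poly_inner_monom_left)
    also have "\<dots> = 1"
      using i gf2_cases by blast
    finally show "poly_inner n x (monom 1 i) = 1" .
  qed (simp_all add: finite_polys_below add_in_polys_below poly_inner_add_right)
  then show ?thesis by (simp add: card_polys_below)
qed

section \<open>Weights of binary vectors\<close>

lemma hweight_map: "hweight (map f xs) = length (filter f xs)"
  by (simp add: hweight_def filter_map)

lemma hweight_zero_vec [simp]: "hweight (Defs.zero_vec N) = 0"
  by (simp add: hweight_def Defs.zero_vec_def)

lemma hweight_vadd_self [simp]: "hweight (vadd u u) = 0"
  by (induction u) (auto simp: hweight_def vadd_def)

lemma hweight_add_hweight: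
  "length u = length v \<Longrightarrow>
    hweight u + hweight v = hweight (vadd u v) + 2 * length (filter id (map2 (\<and>) u v))"
  by (induction u v rule: list_induct2) (auto simp: hweight_def vadd_def)

lemma self_orthogonal_if_doubly_even:
  assumes "binary_linear_code N C" "\<And>u. u \<in> C \<Longrightarrow> 4 dvd hweight u"
  shows "self_orthogonal C"
  unfolding self_orthogonal_def binner_zero_def
proof (intro ballI)
  fix u v assume "u \<in> C" "v \<in> C"
  then have "length u = length v" "4 dvd hweight u" "4 dvd hweight v" "4 dvd hweight (vadd u v)"
    using assms by (auto simp: binary_linear_code_def)
  then show "even (length (filter id (map2 (\<and>) u v)))"
    using hweight_add_hweight[of u v] by presburger
qed

lemma length_filter_concat_replicate:
  "distinct L \<Longrightarrow>
    length (filter P (concat (map (\<lambda>v. replicate (f v) v) L))) = (\<Sum>v\<in>{v \<in> set L. P v}. f v)"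
proof (induction L)
  case (Cons a L)
  have "{v \<in> set (a # L). P v} = (if P a then insert a {v \<in> set L. P v} else {v \<in> set L. P v})"
    by auto
  with Cons show ?case by simp
qed simp

section \<open>The Griesmer length\<close>

lemma sum_power2_lessThan: "(\<Sum>e<n. (2::int) ^ e) = 2 ^ n - 1"
  by (induction n) simp_all

lemma sum_power2_less:
  assumes "E \<subseteq> {..<n}"
  shows "(\<Sum>e\<in>E. (2::int) ^ e) < 2 ^ n"
proof -
  have "(\<Sum>e\<in>E. (2::int) ^ e) \<le> (\<Sum>e<n. 2 ^ e)"
    using assms by (intro sum_mono2) auto
  then show ?thesis by (simp add: sum_power2_lessThan)
qed

lemma ceiling_divide_eq:
  fixes A B :: int and c :: nat
  assumes "0 \<le> B" "B < int c" "int D = int c * A - B"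
  shows "\<lceil>real D / real c\<rceil> = A"
proof (rule ceiling_unique)
  have "real D = real c * real_of_int A - real_of_int B"
    using arg_cong[OF assms(3), of real_of_int] by simp
  moreover have "0 \<le> real_of_int B" "real_of_int B < real c"
    using assms(1,2) by linarith+
  ultimately show "real_of_int A - 1 < real D / real c" "real D / real c \<le> real_of_int A"
    by (auto simp: field_simps)
qed

lemma ceiling_divide_power2:
  assumes "i < k" "finite E"
    and D: "int D = int s * 2 ^ (k - 1) - (\<Sum>e\<in>E. 2 ^ e)"
  shows "\<lceil>real D / 2 ^ i\<rceil> = int s * 2 ^ (k - 1 - i) - (\<Sum>e\<in>{e \<in> E. i \<le> e}. 2 ^ (e - i))"
    (is "_ = ?A")
proof -
  define S where "S = (\<Sum>e\<in>{e \<in> E. i \<le> e}. (2::int) ^ (e - i))"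
  define B where "B = (\<Sum>e\<in>{e \<in> E. e < i}. (2::int) ^ e)"
  have "(\<Sum>e\<in>E. (2::int) ^ e) = (\<Sum>e\<in>{e \<in> E. i \<le> e} \<union> {e \<in> E. e < i}. 2 ^ e)"
    by (rule sum.cong) auto
  also have "\<dots> = (\<Sum>e\<in>{e \<in> E. i \<le> e}. 2 ^ e) + B"
    unfolding B_def using assms(2) by (intro sum.union_disjoint) auto
  also have "(\<Sum>e\<in>{e \<in> E. i \<le> e}. (2::int) ^ e) = 2 ^ i * S"
    unfolding S_def sum_distrib_left by (intro sum.cong refl) (simp flip: power_add)
  finally have "int D = int s * 2 ^ (k - 1) - (2 ^ i * S + B)"
    using D by simp
  also have "(2::int) ^ (k - 1) = 2 ^ i * 2 ^ (k - 1 - i)"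
    using assms(1) by (simp flip: power_add)
  finally have "int D = int (2 ^ i) * ?A - B"
    by (simp add: S_def algebra_simps)
  moreover have "B < int (2 ^ i)"
    unfolding B_def by (simp add: sum_power2_less subset_iff)
  moreover have "0 \<le> B"
    by (simp add: B_def sum_nonneg)
  ultimately have "\<lceil>real D / real (2 ^ i)\<rceil> = ?A"
    by (intro ceiling_divide_eq)
  then show ?thesis
    by simp
qed

lemma sum_power2_diff_atMost: "(\<Sum>i\<le>e. (2::int) ^ (e - i)) = 2 ^ Suc e - 1"
proof -
  have "(\<Sum>i\<le>e. (2::int) ^ (e - i)) = (\<Sum>i<Suc e. 2 ^ (Suc e - Suc i))"
    by (simp add: lessThan_Suc_atMost)
  also have "\<dots> = (\<Sum>i<Suc e. 2 ^ i)"
    by (rule sum.nat_diff_reindex)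
  finally show ?thesis
    by (simp add: sum_power2_lessThan)
qed

lemma sum_sum_power2_diff:
  assumes "E \<subseteq> {..<k}"
  shows "(\<Sum>i<k. \<Sum>e\<in>{e \<in> E. i \<le> e}. (2::int) ^ (e - i)) = (\<Sum>e\<in>E. 2 ^ Suc e - 1)"
proof -
  have fin: "finite E"
    using assms finite_subset by blast
  have "(\<Sum>i<k. \<Sum>e\<in>{e \<in> E. i \<le> e}. (2::int) ^ (e - i))
      = (\<Sum>i<k. \<Sum>e\<in>E. if i \<le> e then 2 ^ (e - i) else 0)"
    using fin by (simp add: sum.inter_filter)
  also have "\<dots> = (\<Sum>e\<in>E. \<Sum>i<k. if i \<le> e then 2 ^ (e - i) else 0)"
    by (rule sum.swap)
  also have "\<dots> = (\<Sum>e\<in>E. \<Sum>i\<le>e. 2 ^ (e - i))"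
  proof (rule sum.cong[OF refl])
    fix e assume "e \<in> E"
    then have "{i \<in> {..<k}. i \<le> e} = {..e}"
      using assms by auto
    then show "(\<Sum>i<k. if i \<le> e then (2::int) ^ (e - i) else 0) = (\<Sum>i\<le>e. 2 ^ (e - i))"
      by (simp flip: sum.inter_filter)
  qed
  finally show ?thesis
    by (simp add: sum_power2_diff_atMost)
qed

lemma griesmer_length_eq:
  assumes E: "E \<subseteq> {..<k}"
    and D: "int D = int s * 2 ^ (k - 1) - (\<Sum>e\<in>E. 2 ^ e)"
  shows "int (griesmer_length k D) = int s * (2 ^ k - 1) - (\<Sum>e\<in>E. 2 ^ Suc e - 1)"
proof -
  have fin: "finite E"
    using E finite_subset by blast
  define A where "A i = int s * 2 ^ (k - 1 - i) - (\<Sum>e\<in>{e \<in> E. i \<le> e}. 2 ^ (e - i))" for i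
  have ceil: "\<lceil>real D / 2 ^ i\<rceil> = A i" if "i < k" for i
    unfolding A_def using that fin D by (rule ceiling_divide_power2)
  have "int (griesmer_length k D) = (\<Sum>i<k. A i)"
    unfolding griesmer_length_def of_nat_sum
  proof (rule sum.cong[OF refl])
    fix i assume "i \<in> {..<k}"
    then have "\<lceil>real D / 2 ^ i\<rceil> = A i"
      by (simp add: ceil)
    moreover have "0 \<le> \<lceil>real D / 2 ^ i\<rceil>"
      using ceiling_mono[of 0 "real D / 2 ^ i"] by simp
    ultimately show "int (nat \<lceil>real D / 2 ^ i\<rceil>) = A i"
      by simp
  qed
  also have "\<dots> = (\<Sum>i<k. int s * 2 ^ (k - 1 - i)) - (\<Sum>i<k. \<Sum>e\<in>{e \<in> E. i \<le> e}. 2 ^ (e - i))"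
    by (simp add: A_def sum_subtractf)
  also have "(\<Sum>i<k. int s * 2 ^ (k - 1 - i)) = int s * (2 ^ k - 1)"
    using sum.nat_diff_reindex[of "\<lambda>i. (2::int) ^ i" k]
    by (simp add: sum_distrib_left[symmetric] sum_power2_lessThan)
  finally show ?thesis
    using sum_sum_power2_diff[OF E] by simp
qed

section \<open>Belov's construction\<close>

text \<open>\<open>columns\<close> repeats every nonzero vector \<open>v\<close> exactly \<open>s - anticode_mult v\<close> times; the
  subtraction is never truncated because \<open>sum_codim_ge\<close> forces \<open>anticode_mult v \<le> s\<close>.\<close>

locale belov_anticode =
  fixes k s :: nat and E :: "nat set" and g :: "nat \<Rightarrow> gf2 poly"
  assumes k_ge_3: "k \<ge> 3"
    and E_subset: "E \<subseteq> {2..k-2}"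
    and irreducible_g: "e \<in> E \<Longrightarrow> irreducible (g e)"
    and monic_g: "e \<in> E \<Longrightarrow> monic (g e)"
    and degree_g: "e \<in> E \<Longrightarrow> degree (g e) = k - 1 - e"
    and sum_codim_ge: "I \<subseteq> E \<Longrightarrow> card I = Suc s \<Longrightarrow> k \<le> (\<Sum>e\<in>I. k - 1 - e)"
begin

lemma finite_E: "finite E"
  using E_subset finite_subset by blast

lemma prime_g: "e \<in> E \<Longrightarrow> prime (g e)"
  using irreducible_g monic_g
  by (metis field_poly_irreducible_imp_prime normalize_monic prime_normalize_iff)

lemma g_nonzero: "e \<in> E \<Longrightarrow> g e \<noteq> 0"
  using monic_g by fastforce

definition g_multiples :: "nat \<Rightarrow> gf2 poly set" where
  "g_multiples e = {p \<in> polys_below k. g e dvd p}"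

lemma g_multiples_subset: "g_multiples e \<subseteq> polys_below k"
  by (auto simp: g_multiples_def)

lemma finite_g_multiples: "finite (g_multiples e)"
  using g_multiples_subset finite_polys_below finite_subset by blast

lemma zero_in_g_multiples: "0 \<in> g_multiples e"
  by (simp add: g_multiples_def)

lemma add_in_g_multiples: "a \<in> g_multiples e \<Longrightarrow> b \<in> g_multiples e \<Longrightarrow> a + b \<in> g_multiples e"
  by (auto simp: g_multiples_def add_in_polys_below)

lemma degree_mult_g:
  assumes "e \<in> E" "h \<noteq> 0"
  shows "degree (g e * h) = k - 1 - e + degree h"
  using assms by (simp add: degree_mult_eq g_nonzero degree_g)

lemma g_multiples_eq_image:
  assumes e: "e \<in> E"
  shows "g_multiples e = (\<lambda>h. g e * h) ` polys_below (Suc e)"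
proof -
  have e_le: "2 \<le> e" "e \<le> k - 2"
    using e E_subset by auto
  have "g e * h \<in> polys_below k \<longleftrightarrow> h \<in> polys_below (Suc e)" for h
  proof (cases "h = 0")
    case False
    then show ?thesis
      using degree_mult_g[OF e False] e_le k_ge_3 by (simp add: polys_below_iff_degree) arith
  qed simp
  then show ?thesis
    by (auto simp: g_multiples_def elim!: dvdE)
qed

lemma card_g_multiples: "e \<in> E \<Longrightarrow> card (g_multiples e) = 2 ^ Suc e"
proof -
  assume e: "e \<in> E"
  have "inj_on (\<lambda>h. g e * h) (polys_below (Suc e))"
    using g_nonzero[OF e] by (auto intro: inj_onI)
  then show ?thesis
    by (simp add: g_multiples_eq_image[OF e] card_image card_polys_below)
qed

definition anticode_mult :: "gf2 poly \<Rightarrow> nat" where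
  "anticode_mult v = card {e \<in> E. v \<in> g_multiples e}"

lemma anticode_mult_le:
  assumes v: "v \<in> polys_below k" "v \<noteq> 0"
  shows "anticode_mult v \<le> s"
proof (rule ccontr)
  assume "\<not> ?thesis"
  then have "Suc s \<le> card {e \<in> E. v \<in> g_multiples e}"
    by (simp add: anticode_mult_def)
  then obtain I where I: "I \<subseteq> {e \<in> E. v \<in> g_multiples e}" "card I = Suc s" "finite I"
    by (rule obtain_subset_with_card_n)
  have IE: "I \<subseteq> E"
    using I(1) by auto
  have inj: "inj_on g I"
  proof (rule inj_onI)
    fix a b assume ab: "a \<in> I" "b \<in> I" "g a = g b"
    then have "a \<in> E" "b \<in> E"
      using IE by auto
    then have "k - 1 - a = k - 1 - b" "a \<le> k - 2" "b \<le> k - 2"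
      using degree_g[OF \<open>a \<in> E\<close>] degree_g[OF \<open>b \<in> E\<close>] ab(3) E_subset by auto
    then show "a = b" by arith
  qed
  have "k \<le> (\<Sum>e\<in>I. k - 1 - e)"
    using sum_codim_ge[OF IE I(2)] .
  also have "\<dots> = (\<Sum>p\<in>g ` I. degree p)"
    using IE by (simp add: sum.reindex[OF inj] degree_g subset_iff)
  also have "\<dots> \<le> degree v"
    using I(1,3) IE v(2) prime_g by (intro sum_degree_primes_dvd_le) (auto simp: g_multiples_def)
  also have "\<dots> < k"
    using v(1) k_ge_3 by (simp add: polys_below_iff_degree)
  finally show False by simp
qed

definition nonzero_vecs :: "gf2 poly set" where
  "nonzero_vecs = polys_below k - {0}"

lemma finite_nonzero_vecs: "finite nonzero_vecs"
  by (simp add: nonzero_vecs_def finite_polys_below)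

lemma card_nonzero_vecs: "card nonzero_vecs = 2 ^ k - 1"
  by (simp add: nonzero_vecs_def finite_polys_below card_polys_below)

lemma int_sum_s_minus_anticode_mult:
  assumes A: "A \<subseteq> nonzero_vecs"
  shows "int (\<Sum>v\<in>A. s - anticode_mult v) = int s * int (card A) - (\<Sum>e\<in>E. int (card (A \<inter> g_multiples e)))"
proof -
  have fin: "finite A"
    using A finite_nonzero_vecs finite_subset by blast
  have "int (\<Sum>v\<in>A. s - anticode_mult v) = (\<Sum>v\<in>A. int s - int (anticode_mult v))"
    unfolding of_nat_sum
  proof (rule sum.cong[OF refl])
    fix v assume "v \<in> A"
    then have "anticode_mult v \<le> s"
      using A anticode_mult_le by (auto simp: nonzero_vecs_def)
    then show "int (s - anticode_mult v) = int s - int (anticode_mult v)" by simp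
  qed
  also have "\<dots> = int s * int (card A) - (\<Sum>v\<in>A. \<Sum>e\<in>E. if v \<in> g_multiples e then 1 else 0)"
    by (simp add: sum_subtractf anticode_mult_def sum.inter_filter[OF finite_E, symmetric])
  also have "(\<Sum>v\<in>A. \<Sum>e\<in>E. if v \<in> g_multiples e then 1 else 0) = (\<Sum>e\<in>E. \<Sum>v\<in>A. if v \<in> g_multiples e then (1::int) else 0)"
    by (rule sum.swap)
  also have "\<dots> = (\<Sum>e\<in>E. int (card (A \<inter> g_multiples e)))"
    using fin by (simp add: sum.inter_filter[symmetric] Int_def)
  finally show ?thesis .
qed

definition columns :: "gf2 poly list" where
  "columns = concat (map (\<lambda>v. replicate (s - anticode_mult v) v)
     (SOME L. distinct L \<and> set L = nonzero_vecs))"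

lemma length_filter_columns:
  "length (filter P columns) = (\<Sum>v\<in>{v \<in> nonzero_vecs. P v}. s - anticode_mult v)"
proof -
  define L where "L = (SOME L. distinct L \<and> set L = nonzero_vecs)"
  have "distinct L \<and> set L = nonzero_vecs"
    unfolding L_def by (rule someI_ex) (metis finite_distinct_list finite_nonzero_vecs)
  then show ?thesis
    unfolding columns_def L_def[symmetric] by (simp add: length_filter_concat_replicate)
qed

definition encode :: "gf2 poly \<Rightarrow> bool list" where
  "encode x = map (\<lambda>v. poly_inner k x v = 1) columns"

lemma length_encode: "length (encode x) = length columns"
  by (simp add: encode_def)

lemma encode_0: "encode 0 = Defs.zero_vec (length columns)"
  by (simp add: encode_def Defs.zero_vec_def map_replicate_const)

lemma vadd_encode: "vadd (encode x) (encode y) = encode (x + y)"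
  by (simp add: vadd_def encode_def zip_map_map zip_same_conv_map poly_inner_add_left
      gf2_add_eq_1_iff)

lemma hweight_encode:
  "hweight (encode x) = (\<Sum>v\<in>{v \<in> nonzero_vecs. poly_inner k x v = 1}. s - anticode_mult v)"
  by (simp add: encode_def hweight_map length_filter_columns)

lemma int_length_columns:
  "int (length columns) = int s * (2 ^ k - 1) - (\<Sum>e\<in>E. 2 ^ Suc e - 1)"
proof -
  have "int (length columns) = (\<Sum>v\<in>nonzero_vecs. s - anticode_mult v)"
    using length_filter_columns[of "\<lambda>_. True"] by simp
  also have "\<dots> = int s * int (card nonzero_vecs) - (\<Sum>e\<in>E. int (card (nonzero_vecs \<inter> g_multiples e)))"
    by (rule int_sum_s_minus_anticode_mult) simp
  also have "(\<Sum>e\<in>E. int (card (nonzero_vecs \<inter> g_multiples e))) = (\<Sum>e\<in>E. 2 ^ Suc e - 1)"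
  proof (rule sum.cong[OF refl])
    fix e assume "e \<in> E"
    have "nonzero_vecs \<inter> g_multiples e = g_multiples e - {0}"
      using g_multiples_subset by (auto simp: nonzero_vecs_def)
    then show "int (card (nonzero_vecs \<inter> g_multiples e)) = 2 ^ Suc e - 1"
      using card_g_multiples[OF \<open>e \<in> E\<close>] zero_in_g_multiples finite_g_multiples by (simp add: of_nat_diff)
  qed
  finally show ?thesis
    by (simp add: card_nonzero_vecs of_nat_diff)
qed

definition nonorthogonal :: "gf2 poly \<Rightarrow> nat set" where
  "nonorthogonal x = {e \<in> E. \<exists>u\<in>g_multiples e. poly_inner k x u = 1}"

lemma card_g_multiples_inner_eq_1:
  assumes "e \<in> E"
  shows "card {u \<in> g_multiples e. poly_inner k x u = 1} = (if e \<in> nonorthogonal x then 2 ^ e else 0)"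
proof (cases "e \<in> nonorthogonal x")
  case True
  then obtain w where "w \<in> g_multiples e" "poly_inner k x w = 1"
    by (auto simp: nonorthogonal_def)
  then have "2 * card {u \<in> g_multiples e. poly_inner k x u = 1} = card (g_multiples e)"
    by (intro card_half_of_additive_gf2_map) (simp_all add: finite_g_multiples add_in_g_multiples poly_inner_add_right)
  with True show ?thesis
    by (simp add: card_g_multiples[OF assms])
next
  case False
  then have "{u \<in> g_multiples e. poly_inner k x u = 1} = {}"
    using assms by (auto simp: nonorthogonal_def)
  then show ?thesis
    using False by (simp only: card.empty if_False)
qed

lemma int_hweight_encode:
  assumes x: "x \<in> polys_below k" "x \<noteq> 0"
  shows "int (hweight (encode x)) = int s * 2 ^ (k - 1) - (\<Sum>e\<in>nonorthogonal x. 2 ^ e)"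
proof -
  define A where "A = {v \<in> nonzero_vecs. poly_inner k x v = 1}"
  have A_eq: "A = {v \<in> polys_below k. poly_inner k x v = 1}"
    by (auto simp: A_def nonzero_vecs_def)
  have "2 * card A = 2 * 2 ^ (k - 1)"
    using card_poly_inner_eq_1[OF x] k_ge_3 by (simp add: A_eq power_eq_if)
  then have card_A: "card A = 2 ^ (k - 1)"
    by simp
  have "int (card (A \<inter> g_multiples e)) = (if e \<in> nonorthogonal x then 2 ^ e else 0)" if "e \<in> E" for e
  proof -
    have "A \<inter> g_multiples e = {u \<in> g_multiples e. poly_inner k x u = 1}"
      using g_multiples_subset by (auto simp: A_eq)
    then show ?thesis
      using card_g_multiples_inner_eq_1[OF that] by simp
  qed
  then have "(\<Sum>e\<in>E. int (card (A \<inter> g_multiples e))) = (\<Sum>e\<in>nonorthogonal x. 2 ^ e)"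
    using finite_E by (simp add: sum.inter_filter nonorthogonal_def cong: sum.cong)
  moreover have "int (hweight (encode x)) = int s * int (card A) - (\<Sum>e\<in>E. int (card (A \<inter> g_multiples e)))"
    unfolding hweight_encode A_def[symmetric] by (rule int_sum_s_minus_anticode_mult) (auto simp: A_def)
  ultimately show ?thesis
    by (simp add: card_A)
qed

lemma four_dvd_hweight_encode:
  assumes "x \<in> polys_below k"
  shows "4 dvd hweight (encode x)"
proof (cases "x = 0")
  case True
  then show ?thesis by (simp add: encode_0)
next
  case False
  have "(4::int) dvd 2 ^ e" if "e \<in> E" for e
    using that E_subset le_imp_power_dvd[of 2 e "2::int"] by auto
  moreover have "(4::int) dvd 2 ^ (k - 1)"
    using k_ge_3 le_imp_power_dvd[of 2 "k - 1" "2::int"] by auto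
  ultimately have "(4::int) dvd int (hweight (encode x))"
    unfolding int_hweight_encode[OF assms False]
    by (intro dvd_diff dvd_mult dvd_sum) (auto simp: nonorthogonal_def)
  then show ?thesis
    by presburger
qed

lemma nonorthogonal_monom: "nonorthogonal (monom 1 (k - 1)) = E"
proof -
  have "\<exists>u\<in>g_multiples e. poly_inner k (monom 1 (k - 1)) u = 1" if e: "e \<in> E" for e
  proof
    define u where "u = g e * monom 1 e"
    have "e \<le> k - 2"
      using e E_subset by auto
    then have "k - 1 - e + e = k - 1"
      by arith
    then have "degree u = k - 1"
      using degree_mult_g[OF e, of "monom 1 e"] by (simp add: u_def degree_monom_eq)
    moreover have "monic u"
      using monic_g[OF e] by (simp add: u_def lead_coeff_mult degree_monom_eq)
    ultimately show "poly_inner k (monom 1 (k - 1)) u = 1"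
      using k_ge_3 by (simp add: poly_inner_monom_left)
    show "u \<in> g_multiples e"
      using \<open>degree u = k - 1\<close> k_ge_3 by (simp add: g_multiples_def u_def polys_below_iff_degree)
  qed
  then show ?thesis
    by (auto simp: nonorthogonal_def)
qed

lemma hweight_encode_ge:
  assumes "x \<in> polys_below k" "x \<noteq> 0"
  shows "int s * 2 ^ (k - 1) - (\<Sum>e\<in>E. 2 ^ e) \<le> int (hweight (encode x))"
proof -
  have "(\<Sum>e\<in>nonorthogonal x. (2::int) ^ e) \<le> (\<Sum>e\<in>E. 2 ^ e)"
    using finite_E by (intro sum_mono2) (auto simp: nonorthogonal_def)
  then show ?thesis
    by (simp add: int_hweight_encode[OF assms])
qed

lemma monom_top_in_polys_below: "(monom 1 (k - 1) :: gf2 poly) \<in> polys_below k"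
  using k_ge_3 by (simp add: polys_below_iff_degree degree_monom_eq)

lemma hweight_encode_monom:
  "int (hweight (encode (monom 1 (k - 1)))) = int s * 2 ^ (k - 1) - (\<Sum>e\<in>E. 2 ^ e)"
  using int_hweight_encode[OF monom_top_in_polys_below] nonorthogonal_monom by simp

lemma hweight_code_ge:
  assumes "u \<in> encode ` polys_below k" "u \<noteq> Defs.zero_vec (length columns)"
  shows "int s * 2 ^ (k - 1) - (\<Sum>e\<in>E. 2 ^ e) \<le> int (hweight u)"
proof -
  obtain x where "x \<in> polys_below k" "u = encode x"
    using assms(1) by blast
  moreover have "x \<noteq> 0"
    using \<open>u = encode x\<close> assms(2) encode_0 by auto
  ultimately show ?thesis
    using hweight_encode_ge by simp
qed

lemma inj_on_encode:
  assumes "0 < int s * 2 ^ (k - 1) - (\<Sum>e\<in>E. 2 ^ e)"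
  shows "inj_on encode (polys_below k)"
proof (rule inj_onI)
  fix x y assume xy: "x \<in> polys_below k" "y \<in> polys_below k" "encode x = encode y"
  then have "hweight (encode (x + y)) = 0"
    by (metis vadd_encode hweight_vadd_self)
  then have "x + y = 0"
    using hweight_encode_ge[of "x + y"] add_in_polys_below[OF xy(1,2)] assms by linarith
  then show "x = y"
    by (simp add: gf2_poly_add_eq_0_iff)
qed

lemma binary_linear_code_encode: "binary_linear_code (length columns) (encode ` polys_below k)"
  unfolding binary_linear_code_def
proof (intro conjI ballI)
  show "Defs.zero_vec (length columns) \<in> encode ` polys_below k"
    using zero_in_polys_below by (metis encode_0 image_eqI)
  fix u v assume "u \<in> encode ` polys_below k" "v \<in> encode ` polys_below k"
  then show "vadd u v \<in> encode ` polys_below k"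
    by (auto simp: vadd_encode add_in_polys_below)
qed (auto simp: length_encode)

lemma griesmer_length_eq_length_columns:
  assumes "int D = int s * 2 ^ (k - 1) - (\<Sum>e\<in>E. 2 ^ e)"
  shows "griesmer_length k D = length columns"
proof -
  have "E \<subseteq> {..<k}"
    using E_subset k_ge_3 by (auto simp: subset_iff)
  then show ?thesis
    using griesmer_length_eq[OF _ assms] int_length_columns by simp
qed

theorem exists_self_orthogonal_griesmer_code:
  assumes D: "int D = int s * 2 ^ (k - 1) - (\<Sum>e\<in>E. 2 ^ e)" and "D > 0"
  shows "\<exists>C. binary_code_NkD (griesmer_length k D) k D C \<and> self_orthogonal C"
proof (intro exI conjI)
  let ?C = "encode ` polys_below k"
  have "card ?C = 2 ^ k"
    using inj_on_encode D \<open>D > 0\<close> by (simp add: card_image card_polys_below)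
  moreover have "D \<le> hweight u" if "u \<in> ?C" "u \<noteq> Defs.zero_vec (length columns)" for u
    using hweight_code_ge[OF that] D by simp
  moreover have "encode (monom 1 (k - 1)) \<in> ?C"
    using monom_top_in_polys_below by simp
  moreover have "hweight (encode (monom 1 (k - 1))) = D"
    using hweight_encode_monom D by simp
  ultimately show "binary_code_NkD (griesmer_length k D) k D ?C"
    using binary_linear_code_encode \<open>D > 0\<close>
    unfolding binary_code_NkD_def griesmer_length_eq_length_columns[OF D]
    by (metis hweight_zero_vec less_irrefl)
  show "self_orthogonal ?C"
    using four_dvd_hweight_encode by (intro self_orthogonal_if_doubly_even[OF binary_linear_code_encode]) auto
qed

end

section \<open>Choice of the parameters\<close>

lemma sum_power2_bits:
  assumes "r < 2 ^ n"
  shows "(\<Sum>i\<in>{i \<in> {..<n}. bit r i}. (2::nat) ^ i) = r"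
proof -
  have "r = take_bit n r"
    using assms by (simp add: take_bit_nat_eq_self)
  also have "\<dots> = (\<Sum>i\<in>{i \<in> {..<n}. bit r i}. 2 ^ i)"
    by (simp add: take_bit_sum push_bit_eq_mult atLeast0LessThan Int_def)
  finally show ?thesis
    by (rule sym)
qed

lemma power2_deficit_decomposition:
  fixes D k :: nat
  assumes "k \<ge> 3" "4 dvd D"
  obtains s E where "E \<subseteq> {2..k-2}" "int D = int s * 2 ^ (k - 1) - (\<Sum>e\<in>E. 2 ^ e)"
proof -
  define q :: nat where "q = 2 ^ (k - 1)"
  define s where "s = (D + q - 1) div q"
  define r where "r = s * q - D"
  have "q > 0"
    by (simp add: q_def)
  then have "D \<le> s * q" "s * q < D + q"
    unfolding s_def using div_mult_mod_eq[of "D + q - 1" q] mod_less_divisor[of q "D + q - 1"]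
    by linarith+
  then have r_less: "r < 2 ^ (k - 1)" and D_eq: "int D = int s * 2 ^ (k - 1) - int r"
    by (simp_all add: r_def q_def of_nat_diff)
  have "4 dvd q"
    using assms(1) le_imp_power_dvd[of 2 "k - 1" "2::nat"] by (simp add: q_def)
  then have "take_bit 2 r = 0"
    using assms(2) by (simp add: r_def take_bit_eq_0_iff dvd_diff_nat)
  then have no_low_bits: "\<not> bit r i" if "i < 2" for i
    using that bit_take_bit_iff[of 2 r i] by simp
  define E where "E = {i \<in> {..<k - 1}. bit r i}"
  have E: "E \<subseteq> {2..k-2}"
  proof
    fix e assume "e \<in> E"
    then have "e < k - 1" "\<not> e < 2"
      using no_low_bits by (auto simp: E_def)
    then show "e \<in> {2..k-2}"
      by simp
  qed
  have bits: "(\<Sum>e\<in>E. (2::nat) ^ e) = r"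
    unfolding E_def by (rule sum_power2_bits[OF r_less])
  then have "int r = (\<Sum>e\<in>E. 2 ^ e)"
    by (simp flip: bits)
  with D_eq show ?thesis
    by (intro that[OF E]) simp
qed

lemma sum_distinct_positive_ge:
  fixes A :: "nat set"
  assumes "finite A" "0 \<notin> A"
  shows "card A * (card A + 1) \<le> 2 * \<Sum>A"
  using assms
proof (induction "card A" arbitrary: A)
  case (Suc n)
  define a where "a = Max A"
  have "A \<noteq> {}"
    using Suc.hyps(2) by auto
  then have a: "a \<in> A" "\<And>x. x \<in> A \<Longrightarrow> x \<le> a"
    using Suc.prems(1) by (simp_all add: a_def)
  have "A \<subseteq> {1..a}"
  proof
    fix x assume "x \<in> A"
    then have "x \<noteq> 0"
      using Suc.prems(2) by metis
    then show "x \<in> {1..a}"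
      using a(2)[OF \<open>x \<in> A\<close>] by simp
  qed
  then have "card A \<le> a"
    using card_mono[of "{1..a}" A] by simp
  moreover have "card (A - {a}) = n"
    using Suc.hyps(2) Suc.prems(1) a(1) by simp
  then have "n * (n + 1) \<le> 2 * \<Sum>(A - {a})"
    using Suc.hyps(1)[of "A - {a}"] Suc.prems by simp
  moreover have "\<Sum>A = a + \<Sum>(A - {a})"
    using a(1) Suc.prems(1) by (simp add: sum.remove)
  ultimately show ?case
    using Suc.hyps(2)[symmetric] by (simp add: algebra_simps)
qed simp

lemma sum_codim_ge_if_triangular:
  assumes I: "I \<subseteq> {2..k-2}" "card I = Suc s" and k: "2 * k \<le> (s + 1) * (s + 2)"
  shows "k \<le> (\<Sum>e\<in>I. k - 1 - e)"
proof -
  have inj: "inj_on (\<lambda>e. k - 1 - e) I"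
    using I(1) by (intro inj_onI) (auto simp: subset_iff)
  have "finite I"
    using I(2) card.infinite by force
  moreover have "card ((\<lambda>e. k - 1 - e) ` I) = Suc s"
    using card_image[OF inj] I(2) by simp
  moreover have "0 \<notin> (\<lambda>e. k - 1 - e) ` I"
  proof
    assume "0 \<in> (\<lambda>e. k - 1 - e) ` I"
    then obtain e where "e \<in> I" "k - 1 - e = 0"
      by auto
    moreover have "2 \<le> e" "e \<le> k - 2"
      using I(1) \<open>e \<in> I\<close> by auto
    ultimately show False
      by arith
  qed
  ultimately have "Suc s * (Suc s + 1) \<le> 2 * \<Sum>((\<lambda>e. k - 1 - e) ` I)"
    using sum_distinct_positive_ge[of "(\<lambda>e. k - 1 - e) ` I"] by simp
  also have "\<Sum>((\<lambda>e. k - 1 - e) ` I) = (\<Sum>e\<in>I. k - 1 - e)"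
    by (rule sum.reindex_cong[OF inj refl refl])
  finally show ?thesis
    using k by simp
qed

lemma double_sum_atLeastAtMost_Suc: "2 * (\<Sum>e\<in>{2..k-2}. e + 1) = (k + 2) * (k - 3 :: nat)"
proof (induction k)
  case (Suc k)
  show ?case
  proof (cases "k \<ge> 3")
    case True
    then obtain j where j: "k = j + 3"
      by (metis add.commute le_Suc_ex)
    have "{2..Suc k - 2} = insert (k - 1) {2..k-2}"
      using True by auto
    then show ?thesis
      using Suc.IH by (simp add: j algebra_simps)
  qed auto
qed simp

lemma sum_codim_ge_if_quadratic:
  assumes I: "I \<subseteq> {2..k-2}" "card I = Suc s" and k: "(k + 2) * (k - 3) \<le> 2 * k * s"
  shows "k \<le> (\<Sum>e\<in>I. k - 1 - e)"
proof -
  have "(\<Sum>e\<in>I. k - 1 - e) + (\<Sum>e\<in>I. e + 1) = (\<Sum>e\<in>I. k)"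
    unfolding sum.distrib[symmetric]
  proof (intro sum.cong refl)
    fix e assume "e \<in> I"
    then have "2 \<le> e" "e \<le> k - 2"
      using I(1) by auto
    then show "k - 1 - e + (e + 1) = k"
      by arith
  qed
  also have "\<dots> = Suc s * k"
    using I(2) by simp
  finally have split: "(\<Sum>e\<in>I. k - 1 - e) + (\<Sum>e\<in>I. e + 1) = Suc s * k" .
  have "2 * (\<Sum>e\<in>I. e + 1) \<le> 2 * (\<Sum>e\<in>{2..k-2}. e + 1)"
    using I(1) by (intro mult_le_mono2 sum_mono2) auto
  also have "\<dots> = (k + 2) * (k - 3)"
    by (rule double_sum_atLeastAtMost_Suc)
  also have "\<dots> \<le> 2 * k * s"
    by (rule k)
  finally have "(\<Sum>e\<in>I. e + 1) \<le> k * s"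
    by simp
  with split show ?thesis
    by (simp add: algebra_simps)
qed

lemma triangular_if_ceiling_sqrt_le:
  assumes "\<lceil>sqrt (2 * real k + 1 / 4) - 3 / 2\<rceil> \<le> int s"
  shows "2 * k \<le> (s + 1) * (s + 2)"
proof -
  have "sqrt (2 * real k + 1 / 4) \<le> real s + 3 / 2"
    using assms by (simp add: ceiling_le_iff)
  then have "(sqrt (2 * real k + 1 / 4)) ^ 2 \<le> (real s + 3 / 2) ^ 2"
    by (rule power_mono) simp
  then have "2 * real k + 1 / 4 \<le> (real s + 3 / 2) ^ 2"
    by simp
  then have "2 * real k \<le> real ((s + 1) * (s + 2))"
    by (simp add: power2_eq_square algebra_simps)
  then show ?thesis
    by linarith
qed

lemma quadratic_if_ceiling_quotient_le:
  assumes "k > 0" "\<lceil>real ((k + 2) * (k - 3)) / (2 * real k)\<rceil> \<le> int s"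
  shows "(k + 2) * (k - 3) \<le> 2 * k * s"
proof -
  have "real ((k + 2) * (k - 3)) / (2 * real k) \<le> real s"
    using assms(2) by (simp add: ceiling_le_iff)
  then have "real ((k + 2) * (k - 3)) \<le> real (2 * k * s)"
    using assms(1) by (simp add: divide_le_eq algebra_simps)
  then show ?thesis
    by (simp only: of_nat_le_iff)
qed

lemma sum_codim_ge_if_min_ceiling_le:
  assumes I: "I \<subseteq> {2..k-2}" "card I = Suc s"
    and s: "min \<lceil>real ((k + 2) * (k - 3)) / (2 * real k)\<rceil>
               \<lceil>sqrt (2 * real k + 1 / 4) - 3 / 2\<rceil> \<le> int s"
  shows "k \<le> (\<Sum>e\<in>I. k - 1 - e)"
proof (cases "\<lceil>real ((k + 2) * (k - 3)) / (2 * real k)\<rceil> \<le> int s")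
  case True
  have "I \<noteq> {}"
    using I(2) by auto
  then have "k > 0"
    using I(1) by auto
  with True show ?thesis
    by (intro sum_codim_ge_if_quadratic[OF I] quadratic_if_ceiling_quotient_le)
next
  case False
  with s have "\<lceil>sqrt (2 * real k + 1 / 4) - 3 / 2\<rceil> \<le> int s"
    by (simp add: min_le_iff_disj)
  then show ?thesis
    by (intro sum_codim_ge_if_triangular[OF I] triangular_if_ceiling_sqrt_le)
qed

lemma multiplier_less_if_positive_deficit:
  fixes m :: int
  assumes "finite E" "E \<noteq> {}" "int D = int s * 2 ^ n - (\<Sum>e\<in>E. 2 ^ e)" "m * 2 ^ n \<le> int D"
  shows "m < int s"
proof -
  have "0 < (\<Sum>e\<in>E. (2::int) ^ e)"
    using assms(1,2) by (intro sum_pos) auto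
  then have "m * 2 ^ n < int s * 2 ^ n"
    using assms(3,4) by linarith
  then show ?thesis
    by simp
qed

theorem theorem4p8:
  fixes k D :: nat and m :: int
  assumes "k \<ge> 4"
    and "m \<ge> min \<lceil>real ((k + 2) * (k - 3)) / (2 * real k)\<rceil>
                   \<lceil>sqrt (2 * real k + 1 / 4) - 3 / 2\<rceil> - 1"
    and "D > 0" and "4 dvd D"
    and "int D \<ge> m * 2 ^ (k - 1)"
  shows "\<exists>C. binary_code_NkD (griesmer_length k D) k D C \<and> self_orthogonal C"
proof -
  have "k \<ge> 3"
    using assms(1) by simp
  then obtain s E where E: "E \<subseteq> {2..k-2}" and D: "int D = int s * 2 ^ (k - 1) - (\<Sum>e\<in>E. 2 ^ e)"
    using assms(4) by (rule power2_deficit_decomposition)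
  have "1 \<le> k - 1 - e" if "e \<in> E" for e
    using that E by (auto simp: subset_iff)
  then have "\<exists>g :: nat \<Rightarrow> gf2 poly. \<forall>e\<in>E. irreducible (g e) \<and> monic (g e) \<and> degree (g e) = k - 1 - e"
    by (rule exists_irreducible_monic_polys)
  then obtain g :: "nat \<Rightarrow> gf2 poly" where g: "\<forall>e\<in>E. irreducible (g e) \<and> monic (g e) \<and> degree (g e) = k - 1 - e"
    by blast
  have codim: "k \<le> (\<Sum>e\<in>I. k - 1 - e)" if I: "I \<subseteq> E" "card I = Suc s" for I
  proof (rule sum_codim_ge_if_min_ceiling_le)
    have "m < int s"
      by (rule multiplier_less_if_positive_deficit[OF finite_subset[OF E] _ D assms(5)])
        (use I in auto)
    with assms(2) show "min \<lceil>real ((k + 2) * (k - 3)) / (2 * real k)\<rceil>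
        \<lceil>sqrt (2 * real k + 1 / 4) - 3 / 2\<rceil> \<le> int s"
      by linarith
  qed (use I E in auto)
  interpret belov_anticode k s E g
    using \<open>k \<ge> 3\<close> E g codim by unfold_locales blast+
  show ?thesis
    using D assms(3) by (rule exists_self_orthogonal_griesmer_code)
qed

end
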